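(* Let $n>1$ be an integer and $N=2n-1$. Then there exists a Jacobi matrix $J$ of order $N+1$ that realizes perfect state transfer, with earliest transfer time $T_0$, and has Early State Exclusion. Moreover, for any given positive integer $m$, such a Jacobi matrix $J$ of order $N+1$ can be constructed so that it has $m$ cases of Early State Exclusion, i.e., there exist $m$ distinct times $t_1,\dots,t_m$ with $0<t_j<T_0$ and $(e^{-iJt_j}\mathbf{e}_0,\mathbf{e}_0)_{\mathbb{C}^{N+1}}=0$ for $j=1,\dots,m$.
   Context: A Jacobi matrix of order $N+1$ is a real symmetric tridiagonal $(N+1)\times(N+1)$ matrix $J$ with diagonal entries $a_0,\dots,a_N\in\mathbb{R}$ and off-diagonal entries $b_0,\dots,b_{N-1}>0$. Let $\mathbf{e}_0,\dots,\mathbf{e}_N$ be the standard basis of $\mathbb{C}^{N+1}$. $J$ realizes perfect state transfer (PST) at time $T>0$ if $e^{-iTJ}\mathbf{e}_0=e^{i\phi}\mathbf{e}_N$ for some $\phi\in\mathbb{R}$. If $T_0$ is the earliest (smallest positive) such time, $J$ is said to have Early State Exclusion (ESE) at time $t$ if $0<t<T_0$ and $(e^{-iJt}\mathbf{e}_0,\mathbf{e}_0)_{\mathbb{C}^{N+1}}=0$. *)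

theory Defs
  imports "HOL-Analysis.Analysis"
begin

text \<open>Matrices of order N+1 are represented as functions nat => nat => real,
  with indices 0..N; vectors in C^(N+1) as functions nat => complex
  (only the entries with index <= N matter).\<close>

definition jacobi_matrix :: "nat \<Rightarrow> (nat \<Rightarrow> real) \<Rightarrow> (nat \<Rightarrow> real) \<Rightarrow> nat \<Rightarrow> nat \<Rightarrow> real" where
  "jacobi_matrix N a b i j =
     (if i \<le> N \<and> j \<le> N then
        (if i = j then a i else if j = i + 1 then b i else if i = j + 1 then b j else 0)
      else 0)"

definition is_jacobi :: "nat \<Rightarrow> (nat \<Rightarrow> real) \<Rightarrow> bool" where
  "is_jacobi N b \<longleftrightarrow> (\<forall>i<N. b i > 0)"

definition mat_vec :: "nat \<Rightarrow> (nat \<Rightarrow> nat \<Rightarrow> real) \<Rightarrow> (nat \<Rightarrow> complex) \<Rightarrow> nat \<Rightarrow> complex" where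
  "mat_vec N M v i = (\<Sum>j\<le>N. complex_of_real (M i j) * v j)"

definition basis_vec :: "nat \<Rightarrow> nat \<Rightarrow> complex" where
  "basis_vec k i = (if i = k then 1 else 0)"

definition evol :: "nat \<Rightarrow> (nat \<Rightarrow> nat \<Rightarrow> real) \<Rightarrow> real \<Rightarrow> (nat \<Rightarrow> complex) \<Rightarrow> nat \<Rightarrow> complex" where
  "evol N M t v i = (\<Sum>k. ((- \<i> * complex_of_real t) ^ k / of_nat (fact k)) * ((mat_vec N M ^^ k) v) i)"

definition inner_C :: "nat \<Rightarrow> (nat \<Rightarrow> complex) \<Rightarrow> (nat \<Rightarrow> complex) \<Rightarrow> complex" where
  "inner_C N u v = (\<Sum>i\<le>N. u i * cnj (v i))"

definition PST :: "nat \<Rightarrow> (nat \<Rightarrow> nat \<Rightarrow> real) \<Rightarrow> real \<Rightarrow> bool" where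
  "PST N M T \<longleftrightarrow> T > 0 \<and>
     (\<exists>\<phi>::real. \<forall>i\<le>N. evol N M T (basis_vec 0) i = exp (\<i> * complex_of_real \<phi>) * basis_vec N i)"

definition earliest_PST :: "nat \<Rightarrow> (nat \<Rightarrow> nat \<Rightarrow> real) \<Rightarrow> real \<Rightarrow> bool" where
  "earliest_PST N M T0 \<longleftrightarrow> PST N M T0 \<and> (\<forall>T. 0 < T \<and> T < T0 \<longrightarrow> \<not> PST N M T)"

definition ESE :: "nat \<Rightarrow> (nat \<Rightarrow> nat \<Rightarrow> real) \<Rightarrow> real \<Rightarrow> real \<Rightarrow> bool" where
  "ESE N M T0 t \<longleftrightarrow> 0 < t \<and> t < T0 \<and> inner_C N (evol N M t (basis_vec 0)) (basis_vec 0) = 0"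

end

theory Submission
  imports Defs "HOL-Computational_Algebra.Polynomial"
begin

(* A Jacobi matrix is determined by its spectrum x 0 < ... < x N together with the weights
   w k of e_0 on its normalised eigenvectors: the orthonormal polynomials P 0, ..., P N of the
   discrete measure sum_k w k delta(x k) satisfy a three-term recurrence whose coefficients
   form J, and (P i (x k))_i is an eigenvector of J for x k. Hence the return amplitude
   (exp(-itJ) e_0, e_0) equals sum_k w k exp(-i t x k).

   If the x k alternate in parity and w k is proportional to 1 / |omega'(x k)|, the Lagrange
   identity makes the sign vector (-1)^k orthogonal to all polynomials of degree < N, hence
   equal to +-P N on the spectrum; this gives PST at time pi, and two eigenvalues at distance
   1 exclude PST earlier. We take a symmetric spectrum of this kind, made of two clusters of
   n consecutive half-integers around -X and X with X large compared with m n. The return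
   amplitude is then the real function sum_k w k cos(t x k), whose sign at t = j pi / X is
   (-1)^j for j = 0, ..., m, so it has m zeros in (0, pi). *)

section \<open>Nodes and Lagrange interpolation\<close>

text \<open>\<open>node_prod N x k = \<omega>'(x k)\<close> for \<open>\<omega> = (X - x 0) \<cdots> (X - x N)\<close>.\<close>
definition node_prod :: "nat \<Rightarrow> (nat \<Rightarrow> real) \<Rightarrow> nat \<Rightarrow> real" where
  "node_prod N x k = (\<Prod>l\<in>{..N} - {k}. x k - x l)"

definition node_poly_except :: "nat \<Rightarrow> (nat \<Rightarrow> real) \<Rightarrow> nat \<Rightarrow> real poly" where
  "node_poly_except N x k = (\<Prod>l\<in>{..N} - {k}. [:- x l, 1:])"

lemma poly_node_poly_except: "poly (node_poly_except N x k) y = (\<Prod>l\<in>{..N} - {k}. y - x l)"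
  unfolding node_poly_except_def poly_prod by simp

lemma poly_node_poly_except_self: "poly (node_poly_except N x k) (x k) = node_prod N x k"
  unfolding poly_node_poly_except node_prod_def ..

lemma poly_node_poly_except_other: "l \<le> N \<Longrightarrow> l \<noteq> k \<Longrightarrow> poly (node_poly_except N x k) (x l) = 0"
  unfolding poly_node_poly_except by (rule prod_zero) auto

lemma degree_node_poly_except: "k \<le> N \<Longrightarrow> degree (node_poly_except N x k) = N"
  unfolding node_poly_except_def by (subst degree_prod_eq_sum_degree) (auto simp: card_Diff_singleton)

lemma coeff_node_poly_except:
  assumes "k \<le> N"
  shows "coeff (node_poly_except N x k) N = 1"
proof -
  have "lead_coeff (node_poly_except N x k) = 1"
    unfolding node_poly_except_def lead_coeff_prod by simp
  then show ?thesis using degree_node_poly_except[OF assms] by simp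
qed

lemma node_prod_nonzero: "inj_on x {..N} \<Longrightarrow> k \<le> N \<Longrightarrow> node_prod N x k \<noteq> 0"
  unfolding node_prod_def by (auto simp: inj_on_def)

lemma poly_nonzero_at_some_node:
  fixes p :: "real poly"
  assumes "inj_on x {..N}" "p \<noteq> 0" "degree p \<le> N"
  obtains k where "k \<le> N" "poly p (x k) \<noteq> 0"
proof (rule ccontr)
  assume "\<not> thesis"
  with that have "x ` {..N} \<subseteq> {y. poly p y = 0}" by auto
  then have "card (x ` {..N}) \<le> card {y. poly p y = 0}"
    using poly_roots_finite[OF assms(2)] by (intro card_mono) auto
  also have "\<dots> \<le> degree p" by (rule card_poly_roots_bound[OF assms(2)])
  finally show False using card_image[OF assms(1)] assms(3) by simp
qed

text \<open>The sum is the leading coefficient of the Lagrange interpolant of \<open>q\<close> at the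
  \<open>N + 1\<close> nodes, i.e. the \<open>N\<close>-th divided difference of \<open>q\<close>.\<close>
lemma sum_div_node_prod_eq_0:
  assumes x: "inj_on x {..N}" and q: "degree q < N"
  shows "(\<Sum>k\<le>N. poly q (x k) / node_prod N x k) = 0"
proof -
  define I where "I = (\<Sum>k\<le>N. smult (poly q (x k) / node_prod N x k) (node_poly_except N x k))"
  have "poly I (x l) = poly q (x l)" if l: "l \<le> N" for l
  proof -
    have "poly I (x l) = (\<Sum>k\<le>N. if k = l then poly q (x l) else 0)"
      unfolding I_def poly_sum using l node_prod_nonzero[OF x]
      by (intro sum.cong) (auto simp: poly_node_poly_except_self poly_node_poly_except_other)
    then show ?thesis using l by simp
  qed
  moreover have "degree I \<le> N" unfolding I_def
    by (intro degree_sum_le) (auto intro: order.trans[OF degree_smult_le] simp: degree_node_poly_except)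
  ultimately have "I = q"
    using card_image[OF x] q by (intro poly_eqI_degree[of "x ` {..N}"]) auto
  then have "coeff I N = 0" using q by (simp add: coeff_eq_0)
  moreover have "coeff I N = (\<Sum>k\<le>N. poly q (x k) / node_prod N x k)"
    unfolding I_def coeff_sum by (intro sum.cong) (auto simp: coeff_node_poly_except)
  ultimately show ?thesis by simp
qed

lemma sgn_node_prod:
  assumes x: "strict_mono_on {..N} x" and k: "k \<le> N"
  shows "sgn (node_prod N x k) = (-1) ^ (N - k)"
proof -
  define A where "A = (\<Prod>l<k. x k - x l) * (\<Prod>l\<in>{k<..N}. x l - x k)"
  have split: "{..N} - {k} = {..<k} \<union> {k<..N}" using k by auto
  have "node_prod N x k = (\<Prod>l<k. x k - x l) * (\<Prod>l\<in>{k<..N}. - (x l - x k))"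
    unfolding node_prod_def split by (subst prod.union_disjoint) auto
  also have "\<dots> = (-1) ^ (N - k) * A"
    unfolding A_def by (subst prod_uminus) simp
  finally have eq: "node_prod N x k = (-1) ^ (N - k) * A" .
  have "0 < A"
    unfolding A_def using k strict_mono_onD[OF x] by (intro mult_pos_pos prod_pos) auto
  then show ?thesis unfolding eq sgn_mult by (simp add: power_sgn)
qed

lemma abs_node_prod_reflect:
  assumes x: "\<And>k. k \<le> N \<Longrightarrow> x (N - k) = - x k" and k: "k \<le> N"
  shows "\<bar>node_prod N x (N - k)\<bar> = \<bar>node_prod N x k\<bar>"
proof -
  have "node_prod N x (N - k) = (\<Prod>l\<in>{..N} - {k}. x (N - k) - x (N - l))"
    unfolding node_prod_def
    by (rule prod.reindex_bij_witness[where i="\<lambda>l. N - l" and j="\<lambda>l. N - l"]) (use k in auto)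
  also have "\<dots> = (\<Prod>l\<in>{..N} - {k}. - (x k - x l))"
    by (rule prod.cong) (use x k in auto)
  also have "\<dots> = (-1) ^ card ({..N} - {k}) * node_prod N x k"
    unfolding node_prod_def by (rule prod_uminus)
  finally show ?thesis by (simp add: abs_mult)
qed

section \<open>Orthonormal polynomials of a discrete measure\<close>

locale discrete_measure =
  fixes N :: nat and x :: "nat \<Rightarrow> real" and w :: "nat \<Rightarrow> real"
  assumes inj_x: "inj_on x {..N}"
    and w_pos: "\<And>k. k \<le> N \<Longrightarrow> 0 < w k"
    and sum_w: "(\<Sum>k\<le>N. w k) = 1"
begin

definition pairing :: "(nat \<Rightarrow> real) \<Rightarrow> real poly \<Rightarrow> real" where
  "pairing v q = (\<Sum>k\<le>N. w k * v k * poly q (x k))"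

definition inner_w :: "real poly \<Rightarrow> real poly \<Rightarrow> real" where
  "inner_w p q = pairing (\<lambda>k. poly p (x k)) q"

lemma pairing_diff: "pairing v (p - q) = pairing v p - pairing v q"
  unfolding pairing_def by (simp add: algebra_simps sum_subtractf)

lemma pairing_smult: "pairing v (smult c p) = c * pairing v p"
  unfolding pairing_def by (simp add: algebra_simps sum_distrib_left)

lemma inner_w_sym: "inner_w p q = inner_w q p"
  unfolding inner_w_def pairing_def by (simp add: mult_ac)

lemma inner_w_X: "inner_w ([:0, 1:] * p) q = inner_w p ([:0, 1:] * q)"
  unfolding inner_w_def pairing_def by (simp add: mult_ac)

lemma inner_w_add_left: "inner_w (p + q) r = inner_w p r + inner_w q r"
  and inner_w_diff_left: "inner_w (p - q) r = inner_w p r - inner_w q r"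
  and inner_w_smult_left: "inner_w (smult c p) r = c * inner_w p r"
  and inner_w_zero_left [simp]: "inner_w 0 r = 0"
  unfolding inner_w_def pairing_def
  by (simp_all add: algebra_simps sum.distrib sum_subtractf sum_distrib_left)

lemma inner_w_add_right: "inner_w r (p + q) = inner_w r p + inner_w r q"
  and inner_w_smult_right: "inner_w r (smult c p) = c * inner_w r p"
  and inner_w_zero_right [simp]: "inner_w r 0 = 0"
  by (simp_all only: inner_w_sym[of r] inner_w_add_left inner_w_smult_left inner_w_zero_left)

lemma inner_w_summand_nonneg: "l \<le> N \<Longrightarrow> 0 \<le> w l * poly p (x l) * poly p (x l)"
  using w_pos[of l] by (simp add: mult.assoc)

lemma inner_w_self_nonneg: "0 \<le> inner_w p p"
  unfolding inner_w_def pairing_def using inner_w_summand_nonneg by (intro sum_nonneg) simp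

lemma inner_w_self_pos:
  assumes "k \<le> N" "poly p (x k) \<noteq> 0"
  shows "0 < inner_w p p"
proof -
  have "0 < w k * poly p (x k) * poly p (x k)"
    using w_pos[OF assms(1)] assms(2) by (auto simp: mult.assoc zero_less_mult_iff linorder_neq_iff)
  also have "\<dots> \<le> inner_w p p"
    unfolding inner_w_def pairing_def using assms(1) inner_w_summand_nonneg by (intro member_le_sum) auto
  finally show ?thesis .
qed

text \<open>Stieltjes' procedure (the Lanczos algorithm). Only \<open>P 0, \<dots>, P N\<close> are meaningful:
  the residual \<open>R N\<close> vanishes at every node.\<close>
fun P :: "nat \<Rightarrow> real poly" where
  "P 0 = 1"
| "P (Suc i) =
    (let r = [:0, 1:] * P i - smult (inner_w ([:0, 1:] * P i) (P i)) (P i)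
       - (if i = 0 then 0 else smult (inner_w ([:0, 1:] * P i) (P (i - 1))) (P (i - 1)))
     in smult (1 / sqrt (inner_w r r)) r)"

definition a :: "nat \<Rightarrow> real" where
  "a i = inner_w ([:0, 1:] * P i) (P i)"

definition b :: "nat \<Rightarrow> real" where
  "b i = inner_w ([:0, 1:] * P (Suc i)) (P i)"

definition R :: "nat \<Rightarrow> real poly" where
  "R i = [:0, 1:] * P i - smult (a i) (P i) - (if i = 0 then 0 else smult (b (i - 1)) (P (i - 1)))"

lemma P_Suc: "P (Suc i) = smult (1 / sqrt (inner_w (R i) (R i))) (R i)"
  by (cases i) (simp_all add: R_def a_def b_def Let_def)

declare P.simps(2) [simp del]

lemma X_mult_P: "[:0, 1:] * P i = R i + smult (a i) (P i) + (if i = 0 then 0 else smult (b (i - 1)) (P (i - 1)))"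
  unfolding R_def by simp

definition lanczos_invariant :: "nat \<Rightarrow> bool" where
  "lanczos_invariant i \<longleftrightarrow> (\<forall>j\<le>i. degree (P j) = j) \<and>
     (\<forall>j\<le>i. \<forall>l\<le>i. inner_w (P j) (P l) = (if j = l then 1 else 0)) \<and>
     (\<forall>j<i. 0 < b j \<and> R j = smult (b j) (P (Suc j)))"

lemma inner_w_R_P:
  assumes inv: "lanczos_invariant i" and j: "j \<le> i"
  shows "inner_w (R i) (P j) = 0"
proof -
  have orth: "\<And>j l. j \<le> i \<Longrightarrow> l \<le> i \<Longrightarrow> inner_w (P j) (P l) = (if j = l then 1 else 0)"
    using inv unfolding lanczos_invariant_def by blast
  have R_P: "inner_w (R i) (P j) = inner_w ([:0, 1:] * P i) (P j) - a i * inner_w (P i) (P j)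
      - (if i = 0 then 0 else b (i - 1) * inner_w (P (i - 1)) (P j))"
    unfolding R_def by (simp add: inner_w_diff_left inner_w_smult_left)
  show ?thesis
  proof (cases "j = i")
    case True
    then show ?thesis using R_P orth[of i i] orth[of "i - 1" i] by (cases i) (auto simp: a_def)
  next
    case False
    with j have ji: "j < i" by simp
    have R_j: "R j = smult (b j) (P (Suc j))"
      using inv ji unfolding lanczos_invariant_def by blast
    have "inner_w ([:0, 1:] * P i) (P j) = inner_w (P i) ([:0, 1:] * P j)" by (rule inner_w_X)
    also have "\<dots> = b j * inner_w (P i) (P (Suc j)) + a j * inner_w (P i) (P j)
        + (if j = 0 then 0 else b (j - 1) * inner_w (P i) (P (j - 1)))"
      unfolding X_mult_P R_j by (simp add: inner_w_add_right inner_w_smult_right)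
    also have "\<dots> = (if i = Suc j then b j else 0)"
      using orth[of i "Suc j"] orth[of i j] orth[of i "j - 1"] ji by auto
    finally show ?thesis using R_P orth[of i j] orth[of "i - 1" j] ji by auto
  qed
qed

lemma lanczos_invariant_0: "lanczos_invariant 0"
  using sum_w by (simp add: lanczos_invariant_def inner_w_def pairing_def)

lemma degree_R:
  assumes inv: "lanczos_invariant i"
  shows "degree (R i) = Suc i"
proof -
  have deg: "\<And>j. j \<le> i \<Longrightarrow> degree (P j) = j"
    using inv unfolding lanczos_invariant_def by blast
  have "P i \<noteq> 0" using deg[of i] inv unfolding lanczos_invariant_def by auto
  define Q where "Q = smult (a i) (P i) + (if i = 0 then 0 else smult (b (i - 1)) (P (i - 1)))"
  have "degree Q \<le> i" unfolding Q_def
    by (rule order.trans[OF degree_add_le]) (auto intro: order.trans[OF degree_smult_le] simp: deg)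
  moreover have R_Q: "R i = pCons 0 (P i) + - Q" unfolding R_def Q_def by simp
  ultimately show ?thesis
    unfolding R_Q using \<open>P i \<noteq> 0\<close> deg[of i] by (subst degree_add_eq_left) auto
qed

lemma inner_w_R_R_pos:
  assumes "lanczos_invariant i" "Suc i \<le> N"
  shows "0 < inner_w (R i) (R i)"
proof -
  have "R i \<noteq> 0" "degree (R i) \<le> N" using degree_R[OF assms(1)] assms(2) by auto
  then obtain k where "k \<le> N" "poly (R i) (x k) \<noteq> 0"
    using poly_nonzero_at_some_node[OF inj_x] by blast
  then show ?thesis by (rule inner_w_self_pos)
qed

lemma b_eq_norm_R:
  assumes inv: "lanczos_invariant i"
  shows "b i = sqrt (inner_w (R i) (R i))"
proof -
  define s where "s = sqrt (inner_w (R i) (R i))"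
  have "b i = inner_w (P (Suc i)) ([:0, 1:] * P i)" unfolding b_def by (rule inner_w_X)
  also have "\<dots> = inner_w (R i) (R i) / s + a i * inner_w (R i) (P i) / s
      + (if i = 0 then 0 else b (i - 1) * inner_w (R i) (P (i - 1)) / s)"
    unfolding X_mult_P P_Suc s_def[symmetric]
    by (simp add: inner_w_add_right inner_w_smult_left inner_w_smult_right)
  also have "\<dots> = inner_w (R i) (R i) / s"
    using inner_w_R_P[OF inv, of i] inner_w_R_P[OF inv, of "i - 1"] by simp
  finally show ?thesis unfolding s_def using real_div_sqrt[OF inner_w_self_nonneg] by simp
qed

lemma lanczos_invariant_Suc:
  assumes inv: "lanczos_invariant i" and iN: "Suc i \<le> N"
  shows "lanczos_invariant (Suc i)"
proof -
  have deg: "\<And>j. j \<le> i \<Longrightarrow> degree (P j) = j"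
    and orth: "\<And>j l. j \<le> i \<Longrightarrow> l \<le> i \<Longrightarrow> inner_w (P j) (P l) = (if j = l then 1 else 0)"
    using inv unfolding lanczos_invariant_def by blast+
  have "0 < b i" unfolding b_eq_norm_R[OF inv] using inner_w_R_R_pos[OF inv iN] by simp
  have P_Suc_i: "P (Suc i) = smult (1 / b i) (R i)" unfolding P_Suc b_eq_norm_R[OF inv] ..
  have deg_Suc: "degree (P (Suc i)) = Suc i"
    unfolding P_Suc_i using \<open>0 < b i\<close> degree_R[OF inv] by simp
  have orth_Suc: "inner_w (P (Suc i)) (P j) = 0" if "j \<le> i" for j
    unfolding P_Suc_i inner_w_smult_left using inner_w_R_P[OF inv that] by simp
  have norm_Suc: "inner_w (P (Suc i)) (P (Suc i)) = 1"
    unfolding P_Suc_i inner_w_smult_left inner_w_smult_right b_eq_norm_R[OF inv]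
    using inner_w_R_R_pos[OF inv iN] by simp
  show ?thesis unfolding lanczos_invariant_def
  proof (intro conjI allI impI)
    fix j assume "j \<le> Suc i"
    then show "degree (P j) = j" using deg deg_Suc by (cases "j = Suc i") auto
  next
    fix j l assume "j \<le> Suc i" "l \<le> Suc i"
    then consider "j = Suc i" "l = Suc i" | "j = Suc i" "l \<le> i" | "j \<le> i" "l = Suc i"
      | "j \<le> i" "l \<le> i"
      by linarith
    then show "inner_w (P j) (P l) = (if j = l then 1 else 0)"
      by cases (use orth orth_Suc norm_Suc inner_w_sym[of "P j" "P l"] in auto)
  next
    fix j assume "j < Suc i"
    then show "0 < b j" "R j = smult (b j) (P (Suc j))"
      using inv \<open>0 < b i\<close> P_Suc_i unfolding lanczos_invariant_def
      by (cases "j = i"; auto)+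
  qed
qed

lemma lanczos_invariant_N: "lanczos_invariant N"
proof -
  have "i \<le> N \<Longrightarrow> lanczos_invariant i" for i
    by (induction i) (auto intro: lanczos_invariant_0 lanczos_invariant_Suc)
  then show ?thesis by simp
qed

lemma degree_P: "j \<le> N \<Longrightarrow> degree (P j) = j"
  and inner_w_P_P: "j \<le> N \<Longrightarrow> l \<le> N \<Longrightarrow> inner_w (P j) (P l) = (if j = l then 1 else 0)"
  and b_pos: "j < N \<Longrightarrow> 0 < b j"
  and R_eq_smult_P: "j < N \<Longrightarrow> R j = smult (b j) (P (Suc j))"
  using lanczos_invariant_N unfolding lanczos_invariant_def by blast+

lemma pairing_eq_0_if_orth_P:
  assumes "\<forall>j\<le>i. pairing v (P j) = 0" "i \<le> N" "degree q \<le> i"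
  shows "pairing v q = 0"
  using assms
proof (induction i arbitrary: q)
  case 0
  then have "q = smult (coeff q 0) (P 0)" by (auto elim!: degree_eq_zeroE)
  then show ?case using 0 by (metis pairing_smult mult_zero_right order_refl)
next
  case (Suc i)
  have deg_Suc: "degree (P (Suc i)) = Suc i" using degree_P Suc.prems by simp
  then have "P (Suc i) \<noteq> 0" by auto
  then have lc: "lead_coeff (P (Suc i)) \<noteq> 0" by simp
  define c where "c = coeff q (Suc i) / lead_coeff (P (Suc i))"
  have "degree (q - smult c (P (Suc i))) \<le> i"
  proof (rule degree_le, intro allI impI)
    fix j assume "i < j"
    then consider "j = Suc i" | "Suc i < j" by linarith
    then show "coeff (q - smult c (P (Suc i))) j = 0"
      by cases (use lc deg_Suc Suc.prems in \<open>auto simp: c_def coeff_eq_0\<close>)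
  qed
  then have "pairing v (q - smult c (P (Suc i))) = 0" using Suc.IH Suc.prems by simp
  then show ?case using Suc.prems(1) by (simp add: pairing_diff pairing_smult)
qed

lemma zero_at_nodes_if_orth_P:
  assumes orth: "\<forall>j\<le>N. pairing v (P j) = 0" and k: "k \<le> N"
  shows "v k = 0"
proof -
  have "pairing v (node_poly_except N x k) = (\<Sum>l\<le>N. if l = k then w k * v k * node_prod N x k else 0)"
    unfolding pairing_def
    by (intro sum.cong) (auto simp: poly_node_poly_except_other poly_node_poly_except_self)
  also have "\<dots> = w k * v k * node_prod N x k" using k by simp
  finally have "w k * v k * node_prod N x k = 0"
    using pairing_eq_0_if_orth_P[OF orth order_refl] degree_node_poly_except[OF k] by simp
  then show ?thesis using w_pos[OF k] node_prod_nonzero[OF inj_x k] by simp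
qed

lemma poly_R_N_at_node: "k \<le> N \<Longrightarrow> poly (R N) (x k) = 0"
  using zero_at_nodes_if_orth_P[of "\<lambda>k. poly (R N) (x k)"] inner_w_R_P[OF lanczos_invariant_N]
  by (simp add: inner_w_def)

lemma three_term_recurrence_at_node:
  assumes "k \<le> N" "i \<le> N"
  shows "x k * poly (P i) (x k) = (if i = 0 then 0 else b (i - 1) * poly (P (i - 1)) (x k))
     + a i * poly (P i) (x k) + (if i < N then b i * poly (P (Suc i)) (x k) else 0)"
proof -
  have "poly ([:0, 1:] * P i) (x k) = poly (R i) (x k) + a i * poly (P i) (x k)
      + (if i = 0 then 0 else b (i - 1) * poly (P (i - 1)) (x k))"
    by (subst X_mult_P) simp
  moreover have "poly (R i) (x k) = (if i < N then b i * poly (P (Suc i)) (x k) else 0)"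
    using R_eq_smult_P poly_R_N_at_node assms by (cases "i < N") auto
  ultimately show ?thesis by (simp add: algebra_simps)
qed

lemma orth_lower_degree_imp_multiple_P_N:
  assumes orth: "\<And>q. degree q < N \<Longrightarrow> pairing s q = 0"
    and norm: "(\<Sum>k\<le>N. w k * s k * s k) = 1"
  obtains c where "\<bar>c\<bar> = 1" "\<And>k. k \<le> N \<Longrightarrow> s k = c * poly (P N) (x k)"
proof -
  define c where "c = pairing s (P N)"
  define d where "d k = s k - c * poly (P N) (x k)" for k
  have pairing_d: "pairing d q = pairing s q - c * inner_w (P N) q" for q
    unfolding d_def pairing_def inner_w_def
    by (simp add: algebra_simps sum_subtractf sum_distrib_left)
  have orth_d: "\<forall>j\<le>N. pairing d (P j) = 0"
  proof (intro allI impI)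
    fix j assume j: "j \<le> N"
    show "pairing d (P j) = 0"
    proof (cases "j = N")
      case True
      then show ?thesis using pairing_d inner_w_P_P[of N N] c_def by simp
    next
      case False
      then show ?thesis using pairing_d orth degree_P inner_w_P_P[of N j] j by simp
    qed
  qed
  then have s_eq: "s k = c * poly (P N) (x k)" if "k \<le> N" for k
    using zero_at_nodes_if_orth_P[OF orth_d that] unfolding d_def by simp
  have "1 = (\<Sum>k\<le>N. w k * (c * poly (P N) (x k)) * (c * poly (P N) (x k)))"
    using norm s_eq by (metis (no_types, lifting) atMost_iff sum.cong)
  also have "\<dots> = c * c * inner_w (P N) (P N)"
    unfolding inner_w_def pairing_def by (simp add: sum_distrib_left algebra_simps)
  finally have "c * c = 1" using inner_w_P_P[of N N] by simp
  then have "c = 1 \<or> c = -1" using power2_eq_1_iff[of c] by (simp add: power2_eq_square)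
  then have "\<bar>c\<bar> = 1" by auto
  then show ?thesis using s_eq by (rule that)
qed

end

section \<open>The Jacobi matrix with prescribed spectral data\<close>

lemma mat_vec_jacobi_matrix:
  assumes "i \<le> N"
  shows "mat_vec N (jacobi_matrix N a b) v i =
    (if i = 0 then 0 else complex_of_real (b (i - 1)) * v (i - 1)) + complex_of_real (a i) * v i
    + (if i < N then complex_of_real (b i) * v (Suc i) else 0)"
proof -
  have "mat_vec N (jacobi_matrix N a b) v i = (\<Sum>j\<le>N. (if j = i then complex_of_real (a i) * v i else 0)
     + (if j = Suc i then complex_of_real (b i) * v j else 0)
     + (if j = i - 1 \<and> 0 < i then complex_of_real (b j) * v j else 0))"
    unfolding mat_vec_def jacobi_matrix_def using assms by (intro sum.cong) auto
  also have "\<dots> = (if i = 0 then 0 else complex_of_real (b (i - 1)) * v (i - 1))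
    + complex_of_real (a i) * v i + (if i < N then complex_of_real (b i) * v (Suc i) else 0)"
    unfolding sum.distrib using assms by (simp add: sum.delta cong: if_cong; arith)
  finally show ?thesis .
qed

lemma mat_vec_jacobi_matrix_beyond: "N < i \<Longrightarrow> mat_vec N (jacobi_matrix N a b) v i = 0"
  unfolding mat_vec_def jacobi_matrix_def by simp

lemma jacobi_matrix_sym: "jacobi_matrix N a b i j = jacobi_matrix N a b j i"
  unfolding jacobi_matrix_def by auto

lemma mat_vec_linear_combination:
  "mat_vec N M (\<lambda>i. \<Sum>k\<in>A. c k * u k i) = (\<lambda>i. \<Sum>k\<in>A. c k * mat_vec N M (u k) i)"
  unfolding mat_vec_def by (simp add: sum_distrib_left sum.swap[of _ A] mult_ac)

lemma evol_linear_combination_eigenvectors: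
  assumes "finite A"
    and eig: "\<And>k. k \<in> A \<Longrightarrow> mat_vec N M (u k) = (\<lambda>i. complex_of_real (\<mu> k) * u k i)"
  shows "evol N M t (\<lambda>i. \<Sum>k\<in>A. c k * u k i) i
    = (\<Sum>k\<in>A. c k * exp (- \<i> * complex_of_real (t * \<mu> k)) * u k i)"
proof -
  have pow: "(mat_vec N M ^^ j) (\<lambda>i. \<Sum>k\<in>A. c k * u k i)
      = (\<lambda>i. \<Sum>k\<in>A. c k * complex_of_real (\<mu> k) ^ j * u k i)" for j
  proof (induction j)
    case (Suc j)
    have "(mat_vec N M ^^ Suc j) (\<lambda>i. \<Sum>k\<in>A. c k * u k i)
        = (\<lambda>i. \<Sum>k\<in>A. c k * complex_of_real (\<mu> k) ^ j * mat_vec N M (u k) i)"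
      by (simp add: Suc.IH mat_vec_linear_combination)
    also have "\<dots> = (\<lambda>i. \<Sum>k\<in>A. c k * complex_of_real (\<mu> k) ^ Suc j * u k i)"
      by (intro ext sum.cong) (auto simp: eig)
    finally show ?case .
  qed simp
  have minus_mult_power: "(- (z * y)) ^ j = (- z) ^ j * y ^ j" for z y :: complex and j
    by (metis mult_minus_left power_mult_distrib)
  have "(\<lambda>j. (- \<i> * complex_of_real t) ^ j / of_nat (fact j) * (mat_vec N M ^^ j) (\<lambda>i. \<Sum>k\<in>A. c k * u k i) i)
     = (\<lambda>j. \<Sum>k\<in>A. c k * u k i * ((- \<i> * complex_of_real (t * \<mu> k)) ^ j /\<^sub>R fact j))"
    unfolding pow
    by (intro ext) (simp add: sum_distrib_left scaleR_conv_of_real divide_inverse minus_mult_power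
        power_mult_distrib mult_ac)
  also have "\<dots> sums (\<Sum>k\<in>A. c k * u k i * exp (- \<i> * complex_of_real (t * \<mu> k)))"
    by (intro sums_sum sums_mult exp_converges)
  finally show ?thesis unfolding evol_def by (simp add: sums_unique[symmetric] mult_ac)
qed

lemma exp_minus_i_pi_shift:
  "exp (- \<i> * complex_of_real (pi * (y + real n))) = exp (- \<i> * complex_of_real (pi * y)) * (-1) ^ n"
proof -
  have "- \<i> * complex_of_real (pi * (y + real n)) = - \<i> * complex_of_real (pi * y) + of_nat n * (- \<i> * pi)"
    by (simp add: algebra_simps)
  then show ?thesis by (simp only: exp_add exp_of_nat_mult) (simp add: exp_minus)
qed

lemma eigenvectors_orthogonal:
  assumes sym: "\<And>i j. M i j = M j i"
    and u: "mat_vec N M u = (\<lambda>i. complex_of_real \<alpha> * u i)"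
    and v: "mat_vec N M v = (\<lambda>i. complex_of_real \<beta> * v i)"
    and "\<alpha> \<noteq> \<beta>"
  shows "(\<Sum>i\<le>N. u i * v i) = 0"
proof -
  have "complex_of_real \<alpha> * (\<Sum>i\<le>N. u i * v i) = (\<Sum>i\<le>N. mat_vec N M u i * v i)"
    unfolding u by (simp add: sum_distrib_left mult_ac)
  also have "\<dots> = (\<Sum>j\<le>N. mat_vec N M v j * u j)"
    unfolding mat_vec_def sum_distrib_right by (subst sum.swap) (simp add: sym mult_ac)
  also have "\<dots> = complex_of_real \<beta> * (\<Sum>i\<le>N. u i * v i)"
    unfolding v by (simp add: sum_distrib_left mult_ac)
  finally show ?thesis using \<open>\<alpha> \<noteq> \<beta>\<close> by simp
qed

context discrete_measure
begin

abbreviation J :: "nat \<Rightarrow> nat \<Rightarrow> real" where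
  "J \<equiv> jacobi_matrix N a b"

definition eigvec :: "nat \<Rightarrow> nat \<Rightarrow> complex" where
  "eigvec k i = (if i \<le> N then complex_of_real (poly (P i) (x k)) else 0)"

lemma mat_vec_eigvec:
  assumes k: "k \<le> N"
  shows "mat_vec N J (eigvec k) = (\<lambda>i. complex_of_real (x k) * eigvec k i)"
proof
  fix i
  show "mat_vec N J (eigvec k) i = complex_of_real (x k) * eigvec k i"
  proof (cases "i \<le> N")
    case True
    then show ?thesis
      unfolding mat_vec_jacobi_matrix[OF True] eigvec_def
      using three_term_recurrence_at_node[OF k True] by (auto simp flip: of_real_mult of_real_add)
  qed (simp add: mat_vec_jacobi_matrix_beyond eigvec_def)
qed

lemma basis_vec_0_eq_sum_eigvec: "basis_vec 0 = (\<lambda>i. \<Sum>k\<le>N. complex_of_real (w k) * eigvec k i)"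
proof
  fix i
  show "basis_vec 0 i = (\<Sum>k\<le>N. complex_of_real (w k) * eigvec k i)"
  proof (cases "i \<le> N")
    case True
    have "(\<Sum>k\<le>N. complex_of_real (w k) * eigvec k i) = complex_of_real (inner_w (P i) (P 0))"
      unfolding inner_w_def pairing_def eigvec_def using True by simp
    then show ?thesis using inner_w_P_P[of i 0] True by (simp add: basis_vec_def)
  qed (simp add: eigvec_def basis_vec_def)
qed

lemma evol_basis_vec_0:
  "evol N J t (basis_vec 0) i
    = (\<Sum>k\<le>N. complex_of_real (w k) * exp (- \<i> * complex_of_real (t * x k)) * eigvec k i)"
  by (subst basis_vec_0_eq_sum_eigvec) (rule evol_linear_combination_eigenvectors; simp add: mat_vec_eigvec)

lemma return_amplitude:
  "inner_C N (evol N J t (basis_vec 0)) (basis_vec 0)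
    = (\<Sum>k\<le>N. complex_of_real (w k) * exp (- \<i> * complex_of_real (t * x k)))"
proof -
  have "inner_C N (evol N J t (basis_vec 0)) (basis_vec 0) = evol N J t (basis_vec 0) 0"
    unfolding inner_C_def basis_vec_def by (simp add: if_distrib cong: if_cong)
  then show ?thesis unfolding evol_basis_vec_0 by (simp add: eigvec_def)
qed

lemma return_amplitude_symmetric:
  assumes x: "\<And>k. k \<le> N \<Longrightarrow> x (N - k) = - x k" and w: "\<And>k. k \<le> N \<Longrightarrow> w (N - k) = w k"
  shows "inner_C N (evol N J t (basis_vec 0)) (basis_vec 0)
    = complex_of_real (\<Sum>k\<le>N. w k * cos (t * x k))"
proof -
  have "(\<Sum>k\<le>N. w k * sin (t * x k)) = (\<Sum>k\<le>N. w (N - k) * sin (t * x (N - k)))"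
    by (rule sum.reindex_bij_witness[where i="\<lambda>l. N - l" and j="\<lambda>l. N - l"]) auto
  also have "\<dots> = - (\<Sum>k\<le>N. w k * sin (t * x k))"
    unfolding sum_negf[symmetric] by (intro sum.cong) (auto simp: x w)
  finally have "(\<Sum>k\<le>N. w k * sin (t * x k)) = 0" by simp
  have exp_eq: "exp (- \<i> * complex_of_real (t * x k))
      = complex_of_real (cos (t * x k)) - \<i> * complex_of_real (sin (t * x k))" for k
    by (simp add: complex_eq_iff Re_exp Im_exp)
  have "(\<Sum>k\<le>N. complex_of_real (w k) * exp (- \<i> * complex_of_real (t * x k)))
      = (\<Sum>k\<le>N. complex_of_real (w k * cos (t * x k)) - \<i> * complex_of_real (w k * sin (t * x k)))"
    unfolding exp_eq by (simp add: algebra_simps)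
  also have "\<dots> = complex_of_real (\<Sum>k\<le>N. w k * cos (t * x k))
      - \<i> * complex_of_real (\<Sum>k\<le>N. w k * sin (t * x k))"
    by (simp add: sum_subtractf sum_distrib_left)
  finally show ?thesis unfolding return_amplitude using \<open>(\<Sum>k\<le>N. w k * sin (t * x k)) = 0\<close> by simp
qed

lemma inner_evol_eigvec:
  assumes l: "l \<le> N"
  shows "(\<Sum>i\<le>N. evol N J t (basis_vec 0) i * eigvec l i)
    = complex_of_real (w l * (\<Sum>i\<le>N. poly (P i) (x l) * poly (P i) (x l)))
      * exp (- \<i> * complex_of_real (t * x l))"
proof -
  have orth: "(\<Sum>i\<le>N. eigvec k i * eigvec l i)
      = (if k = l then complex_of_real (\<Sum>i\<le>N. poly (P i) (x l) * poly (P i) (x l)) else 0)"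
    if k: "k \<le> N" for k
    using eigenvectors_orthogonal[OF jacobi_matrix_sym mat_vec_eigvec[OF k] mat_vec_eigvec[OF l]]
      inj_x k l by (auto simp: inj_on_def eigvec_def)
  have "(\<Sum>i\<le>N. evol N J t (basis_vec 0) i * eigvec l i)
      = (\<Sum>k\<le>N. complex_of_real (w k) * exp (- \<i> * complex_of_real (t * x k))
          * (\<Sum>i\<le>N. eigvec k i * eigvec l i))"
    unfolding evol_basis_vec_0 sum_distrib_left sum_distrib_right by (subst sum.swap) (simp add: mult_ac)
  also have "\<dots> = (\<Sum>k\<le>N. if k = l then complex_of_real (w l) * exp (- \<i> * complex_of_real (t * x l))
      * complex_of_real (\<Sum>i\<le>N. poly (P i) (x l) * poly (P i) (x l)) else 0)"
    by (intro sum.cong) (auto simp: orth)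
  finally show ?thesis using l by (simp add: mult_ac)
qed

text \<open>Pairing the PST identity with \<open>eigvec l\<close> gives
  \<open>w l \<parallel>eigvec l\<parallel>\<^sup>2 e\<^sup>-\<^sup>i\<^sup>T\<^sup>x\<^sup>l = e\<^sup>i\<^sup>\<phi> P N (x l)\<close>, where all factors except the phases are real.\<close>
lemma PST_imp_real_phases:
  assumes "PST N J T"
  obtains \<phi> where "\<And>l. l \<le> N \<Longrightarrow> exp (- \<i> * complex_of_real (T * x l + \<phi>)) \<in> \<real>"
proof -
  obtain \<phi> where \<phi>: "\<forall>i\<le>N. evol N J T (basis_vec 0) i = exp (\<i> * complex_of_real \<phi>) * basis_vec N i"
    using assms unfolding PST_def by blast
  have "exp (- \<i> * complex_of_real (T * x l + \<phi>)) \<in> \<real>" if l: "l \<le> N" for l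
  proof -
    define g where "g = (\<Sum>i\<le>N. poly (P i) (x l) * poly (P i) (x l))"
    have "poly (P 0) (x l) * poly (P 0) (x l) \<le> g"
      unfolding g_def by (rule member_le_sum) auto
    then have "1 \<le> g" by simp
    have "(\<Sum>i\<le>N. evol N J T (basis_vec 0) i * eigvec l i)
        = (\<Sum>i\<le>N. if i = N then exp (\<i> * complex_of_real \<phi>) * eigvec l N else 0)"
      using \<phi> by (intro sum.cong) (auto simp: basis_vec_def)
    then have eq: "complex_of_real (w l * g) * exp (- \<i> * complex_of_real (T * x l))
        = exp (\<i> * complex_of_real \<phi>) * complex_of_real (poly (P N) (x l))"
      unfolding inner_evol_eigvec[OF l] g_def[symmetric] by (simp add: eigvec_def)
    define z where "z = exp (- \<i> * complex_of_real (T * x l + \<phi>))"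
    have z: "exp (- \<i> * complex_of_real (T * x l)) = z * exp (\<i> * complex_of_real \<phi>)"
      unfolding z_def by (simp flip: exp_add add: algebra_simps)
    have "exp (\<i> * complex_of_real \<phi>) * (complex_of_real (w l * g) * z)
        = exp (\<i> * complex_of_real \<phi>) * complex_of_real (poly (P N) (x l))"
      using eq unfolding z by (simp add: mult_ac)
    then have "z = complex_of_real (poly (P N) (x l) / (w l * g))"
      using w_pos[OF l] \<open>1 \<le> g\<close> by (simp add: field_simps)
    then show ?thesis unfolding z_def by simp
  qed
  then show ?thesis by (rule that)
qed

text \<open>Consecutive eigenvalues at distance 1 make the phase \<open>e\<^sup>-\<^sup>i\<^sup>T\<close> a ratio of two reals.\<close>
lemma not_PST_before_pi:
  assumes "l < N" "x (Suc l) = x l + 1" "0 < T" "T < pi"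
  shows "\<not> PST N J T"
proof
  assume "PST N J T"
  then obtain \<phi> where real: "\<And>l. l \<le> N \<Longrightarrow> exp (- \<i> * complex_of_real (T * x l + \<phi>)) \<in> \<real>"
    using PST_imp_real_phases by blast
  define z where "z = exp (- \<i> * complex_of_real (T * x l + \<phi>))"
  have "exp (- \<i> * complex_of_real (T * x (Suc l) + \<phi>)) = z * exp (- \<i> * complex_of_real T)"
    unfolding z_def assms(2) by (simp add: exp_add[symmetric] algebra_simps)
  then have "exp (- \<i> * complex_of_real T) = exp (- \<i> * complex_of_real (T * x (Suc l) + \<phi>)) / z"
    by (simp add: z_def)
  also have "\<dots> \<in> \<real>" unfolding z_def using real assms(1) by (intro Reals_divide) auto
  finally have "sin T = 0" by (simp add: complex_is_Real_iff Im_exp)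
  moreover have "0 < sin T" using assms(3,4) by (rule sin_gt_zero)
  ultimately show False by simp
qed

lemma pairing_alternating_eq_0:
  assumes mono: "strict_mono_on {..N} x"
    and weights: "\<And>k. k \<le> N \<Longrightarrow> w k * \<bar>node_prod N x k\<bar> = c"
    and q: "degree q < N"
  shows "pairing (\<lambda>k. (-1) ^ k) q = 0"
proof -
  have "w k * (-1) ^ k = c * (-1) ^ N / node_prod N x k" if k: "k \<le> N" for k
  proof -
    define A where "A = \<bar>node_prod N x k\<bar>"
    have "A \<noteq> 0" unfolding A_def using node_prod_nonzero[OF inj_x k] by simp
    have "node_prod N x k = (-1) ^ (N - k) * A"
      unfolding A_def using sgn_node_prod[OF mono k] sgn_mult_abs[of "node_prod N x k"] by simp
    moreover have "(-1::real) ^ N = (-1) ^ (N - k) * (-1) ^ k"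
      using k by (simp flip: power_add)
    moreover have "w k = c / A"
      using weights[OF k] \<open>A \<noteq> 0\<close> unfolding A_def by (simp add: field_simps)
    ultimately show ?thesis using \<open>A \<noteq> 0\<close> by (simp add: field_simps)
  qed
  then have "pairing (\<lambda>k. (-1) ^ k) q = c * (-1) ^ N * (\<Sum>k\<le>N. poly q (x k) / node_prod N x k)"
    unfolding pairing_def sum_distrib_left by (intro sum.cong) auto
  then show ?thesis using sum_div_node_prod_eq_0[OF inj_x q] by simp
qed

lemma PST_at_pi:
  assumes mono: "strict_mono_on {..N} x"
    and parity: "\<And>k. k \<le> N \<Longrightarrow> \<exists>j. x k = x 0 + real (k + 2 * j)"
    and weights: "\<And>k. k \<le> N \<Longrightarrow> w k * \<bar>node_prod N x k\<bar> = c"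
  shows "PST N J pi"
proof -
  define s where "s k = (-1::real) ^ k" for k
  have "(\<Sum>k\<le>N. w k * s k * s k) = 1"
    using sum_w unfolding s_def by (simp add: mult.assoc flip: power_add)
  then obtain c' where c': "\<bar>c'\<bar> = 1" "\<And>k. k \<le> N \<Longrightarrow> s k = c' * poly (P N) (x k)"
    using orth_lower_degree_imp_multiple_P_N pairing_alternating_eq_0[OF mono weights]
    unfolding s_def by blast
  define \<gamma> where "\<gamma> = exp (- \<i> * complex_of_real (pi * x 0))"
  have phase: "exp (- \<i> * complex_of_real (pi * x k)) = \<gamma> * complex_of_real (s k)" if k: "k \<le> N" for k
  proof -
    obtain j where j: "x k = x 0 + real (k + 2 * j)" using parity[OF k] by blast
    have "exp (- \<i> * complex_of_real (pi * x k)) = \<gamma> * (-1) ^ (k + 2 * j)"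
      unfolding j \<gamma>_def by (rule exp_minus_i_pi_shift)
    then show ?thesis unfolding s_def by (simp add: power_add)
  qed
  have "norm (\<gamma> * complex_of_real c') = 1" using c'(1) by (simp add: \<gamma>_def norm_mult)
  then obtain \<phi> where \<phi>: "\<gamma> * complex_of_real c' = exp (\<i> * complex_of_real \<phi>)"
    by (metis complex_unimodular_polar cis.code cis_conv_exp)
  have "evol N J pi (basis_vec 0) i = exp (\<i> * complex_of_real \<phi>) * basis_vec N i" if i: "i \<le> N" for i
  proof -
    have "evol N J pi (basis_vec 0) i
        = (\<Sum>k\<le>N. \<gamma> * complex_of_real c' * complex_of_real (w k * poly (P N) (x k) * poly (P i) (x k)))"
      unfolding evol_basis_vec_0 using phase c'(2) i by (intro sum.cong) (auto simp: eigvec_def)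
    also have "\<dots> = \<gamma> * complex_of_real c' * complex_of_real (inner_w (P N) (P i))"
      unfolding inner_w_def pairing_def by (simp add: sum_distrib_left)
    finally show ?thesis using inner_w_P_P[OF _ i, of N] \<phi> by (simp add: basis_vec_def)
  qed
  then show ?thesis unfolding PST_def by auto
qed

end

section \<open>A Jacobi matrix with early state exclusion\<close>

lemma cos_sum_sign_at_multiple:
  fixes w y :: "nat \<Rightarrow> real"
  assumes w: "\<And>k. k \<le> N \<Longrightarrow> 0 < w k"
    and y: "\<And>k. k \<le> N \<Longrightarrow> \<bar>\<bar>y k\<bar> - X\<bar> \<le> \<delta>"
    and "0 < X" and small: "2 * real j * \<delta> < X"
  shows "0 < (-1) ^ j * (\<Sum>k\<le>N. w k * cos (real j * pi / X * y k))"
proof -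
  define t where "t = real j * pi / X"
  have "0 \<le> t" unfolding t_def using \<open>0 < X\<close> by simp
  have "t * \<delta> < pi / 2"
  proof -
    have "2 * real j * \<delta> * pi < X * pi" using small by simp
    then show ?thesis unfolding t_def using \<open>0 < X\<close> by (simp add: field_simps)
  qed
  have "0 < w k * ((-1) ^ j * cos (t * y k))" if k: "k \<le> N" for k
  proof -
    have "cos (t * y k) = cos (t * \<bar>y k\<bar>)"
      using \<open>0 \<le> t\<close> by (metis abs_mult abs_of_nonneg cos_abs_real)
    also have "\<dots> = cos (real j * pi + t * (\<bar>y k\<bar> - X))"
      unfolding t_def using \<open>0 < X\<close> by (simp add: field_simps)
    also have "\<dots> = (-1) ^ j * cos (t * (\<bar>y k\<bar> - X))"
      by (simp add: cos_add)
    finally have "(-1) ^ j * cos (t * y k) = ((-1) ^ j * (-1) ^ j) * cos (t * (\<bar>y k\<bar> - X))"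
      by simp
    also have "\<dots> = cos (t * (\<bar>y k\<bar> - X))" by (simp flip: power_add)
    finally have cos_eq: "(-1) ^ j * cos (t * y k) = cos (t * (\<bar>y k\<bar> - X))" .
    have "\<bar>t * (\<bar>y k\<bar> - X)\<bar> \<le> t * \<delta>"
      using mult_left_mono[OF y[OF k] \<open>0 \<le> t\<close>] \<open>0 \<le> t\<close> by (simp add: abs_mult)
    then have "0 < cos (t * (\<bar>y k\<bar> - X))"
      using \<open>t * \<delta> < pi / 2\<close> by (intro cos_gt_zero_pi) auto
    then show ?thesis using w[OF k] cos_eq by simp
  qed
  then have "0 < (\<Sum>k\<le>N. w k * ((-1) ^ j * cos (t * y k)))" by (intro sum_pos) auto
  then show ?thesis unfolding t_def by (simp add: sum_distrib_left mult_ac)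
qed

lemma alternating_signs_imp_roots:
  fixes h :: "real \<Rightarrow> real" and t :: "nat \<Rightarrow> real"
  assumes h: "continuous_on UNIV h" and t: "strict_mono t"
    and sign: "\<And>j. j \<le> m \<Longrightarrow> 0 < (-1) ^ j * h (t j)"
  obtains S where "card S = m" "\<And>z. z \<in> S \<Longrightarrow> t 0 < z \<and> z < t m \<and> h z = 0"
proof -
  have "\<exists>z. t j < z \<and> z < t (Suc j) \<and> h z = 0" if j: "j < m" for j
  proof -
    define g where "g z = (-1) ^ j * h z" for z
    have g_ends: "0 < g (t j)" "g (t (Suc j)) < 0"
      using sign[of j] sign[of "Suc j"] j unfolding g_def by auto
    moreover have "t j \<le> t (Suc j)" using strict_monoD[OF t, of j "Suc j"] by simp
    moreover have "continuous_on {t j..t (Suc j)} g"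
      unfolding g_def by (intro continuous_intros continuous_on_subset[OF h]) auto
    ultimately obtain z where "t j \<le> z" "z \<le> t (Suc j)" "g z = 0"
      using IVT2'[of g "t (Suc j)" 0 "t j"] by auto
    moreover have "z \<noteq> t j" "z \<noteq> t (Suc j)" using g_ends \<open>g z = 0\<close> by auto
    ultimately show ?thesis unfolding g_def by (intro exI[of _ z]) auto
  qed
  then obtain z where z: "\<And>j. j < m \<Longrightarrow> t j < z j \<and> z j < t (Suc j) \<and> h (z j) = 0"
    by metis
  have z_mono: "z i < z j" if "i < j" "j < m" for i j
  proof -
    have "t (Suc i) \<le> t j" using that by (simp add: strict_mono_less_eq[OF t])
    then show ?thesis using z[of i] z[of j] that by auto
  qed
  have "inj_on z {..<m}"
  proof (rule linorder_inj_onI')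
    fix i j assume "i \<in> {..<m}" "j \<in> {..<m}" "i < j"
    then show "z i \<noteq> z j" using z_mono[of i j] by simp
  qed
  then have "card (z ` {..<m}) = m" by (simp add: card_image)
  moreover have "t 0 < y \<and> y < t m \<and> h y = 0" if y: "y \<in> z ` {..<m}" for y
  proof -
    obtain j where j: "j < m" "y = z j" using y by blast
    have "t 0 \<le> t j" "t (Suc j) \<le> t m" using j by (simp_all add: strict_mono_less_eq[OF t])
    then show ?thesis using z[OF j(1)] j(2) by auto
  qed
  ultimately show ?thesis by (rule that)
qed

locale ese_example =
  fixes n m :: nat
  assumes n_gt_1: "1 < n" and m_pos: "0 < m"
begin

abbreviation N :: nat where "N \<equiv> 2 * n - 1"

definition gap :: real where "gap = 2 * real m * real n"

text \<open>Two clusters of \<open>n\<close> consecutive half-integers, centred at \<open>-centre\<close> and \<open>centre\<close>.\<close>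
definition node :: "nat \<Rightarrow> real" where
  "node k = real k - real n + 1 / 2 + (if n \<le> k then gap else - gap)"

definition centre :: real where "centre = gap + real n / 2"

definition norm_const :: real where "norm_const = (\<Sum>l\<le>N. 1 / \<bar>node_prod N node l\<bar>)"

definition weight :: "nat \<Rightarrow> real" where
  "weight k = 1 / (norm_const * \<bar>node_prod N node k\<bar>)"

lemma gap_nonneg: "0 \<le> gap"
  unfolding gap_def by simp

lemma strict_mono_node: "strict_mono node"
proof
  fix i j :: nat assume "i < j"
  then show "node i < node j" unfolding node_def using gap_nonneg by auto
qed

lemma strict_mono_on_node: "strict_mono_on A node"
  using strict_mono_node by (rule monotone_on_subset) simp

lemma inj_on_node: "inj_on node A"
  using strict_mono_on_node by (rule strict_mono_on_imp_inj_on)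

lemma node_reflect: "k \<le> N \<Longrightarrow> node (N - k) = - node k"
  unfolding node_def using n_gt_1 by (auto simp: of_nat_diff)

lemma node_parity: "\<exists>j. node k = node 0 + real (k + 2 * j)"
  by (rule exI[of _ "if n \<le> k then 2 * m * n else 0"]) (use n_gt_1 in \<open>simp add: node_def gap_def\<close>)

lemma node_Suc_n: "node (Suc n) = node n + 1"
  unfolding node_def by simp

lemma node_near_centre:
  assumes k: "k \<le> N"
  shows "\<bar>\<bar>node k\<bar> - centre\<bar> \<le> (real n - 1) / 2"
proof -
  have "real (k + 1) \<le> real (2 * n)" using k n_gt_1 by simp
  then have "real k + 1 \<le> 2 * real n" by simp
  then show ?thesis
    using gap_nonneg unfolding node_def centre_def by (cases "n \<le> k") (auto simp: abs_if)
qed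

lemma node_prod_node_nonzero: "k \<le> N \<Longrightarrow> node_prod N node k \<noteq> 0"
  using inj_on_node by (rule node_prod_nonzero)

lemma norm_const_pos: "0 < norm_const"
  unfolding norm_const_def using node_prod_node_nonzero by (intro sum_pos) auto

lemma weight_mult_abs_node_prod: "k \<le> N \<Longrightarrow> weight k * \<bar>node_prod N node k\<bar> = 1 / norm_const"
  unfolding weight_def using node_prod_node_nonzero by simp

lemma weight_reflect: "k \<le> N \<Longrightarrow> weight (N - k) = weight k"
  unfolding weight_def using abs_node_prod_reflect[of N node k, OF node_reflect] by simp

sublocale discrete_measure N node weight
proof
  show "inj_on node {..N}" by (rule inj_on_node)
  show "0 < weight k" if "k \<le> N" for k
    unfolding weight_def using norm_const_pos node_prod_node_nonzero[OF that] by simp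
  have weight_eq: "weight k = 1 / \<bar>node_prod N node k\<bar> / norm_const" for k
    unfolding weight_def by (simp add: mult.commute)
  show "(\<Sum>k\<le>N. weight k) = 1"
    unfolding weight_eq sum_divide_distrib[symmetric] norm_const_def[symmetric] using norm_const_pos by simp
qed

lemma earliest_PST_pi: "earliest_PST N J pi"
proof -
  have "PST N J pi"
    using strict_mono_on_node node_parity weight_mult_abs_node_prod by (rule PST_at_pi)
  moreover have "\<not> PST N J T" if "0 < T" "T < pi" for T
    using not_PST_before_pi[of n] node_Suc_n n_gt_1 that by simp
  ultimately show ?thesis unfolding earliest_PST_def by blast
qed

lemma exists_ESE_times: "\<exists>S. card S = m \<and> (\<forall>t\<in>S. ESE N J pi t)"
proof -
  define h where "h t = (\<Sum>k\<le>N. weight k * cos (t * node k))" for t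
  define t where "t j = real j * pi / centre" for j
  have "real m * 1 \<le> real m * (2 * real n)" using n_gt_1 by (intro mult_left_mono) auto
  then have "real m < centre" using n_gt_1 unfolding centre_def gap_def by simp
  then have "0 < centre" by linarith
  have "0 < (-1) ^ j * h (t j)" if "j \<le> m" for j
  proof -
    have "real j * (real n - 1) \<le> real m * (real n - 1)"
      using that n_gt_1 by (intro mult_right_mono) auto
    also have "\<dots> < real m * (2 * real n)"
      using m_pos by (intro mult_strict_left_mono) auto
    finally have "2 * real j * ((real n - 1) / 2) < centre"
      unfolding centre_def gap_def by simp
    then show ?thesis
      unfolding h_def t_def using \<open>0 < centre\<close> w_pos node_near_centre
      by (intro cos_sum_sign_at_multiple)
  qed
  moreover have "continuous_on UNIV h" unfolding h_def by (intro continuous_intros)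
  moreover have "strict_mono t"
    unfolding t_def using \<open>0 < centre\<close> by (intro strict_monoI) (simp add: divide_strict_right_mono)
  ultimately obtain S where S: "card S = m" "\<And>z. z \<in> S \<Longrightarrow> t 0 < z \<and> z < t m \<and> h z = 0"
    using alternating_signs_imp_roots[of h t m] by blast
  have "t m < pi" unfolding t_def using \<open>real m < centre\<close> \<open>0 < centre\<close> by (simp add: field_simps)
  have amplitude: "inner_C N (evol N J z (basis_vec 0)) (basis_vec 0) = complex_of_real (h z)" for z
    unfolding h_def by (rule return_amplitude_symmetric[OF node_reflect weight_reflect])
  have "ESE N J pi z" if "z \<in> S" for z
    using S(2)[OF that] \<open>t m < pi\<close> amplitude[of z] unfolding ESE_def t_def by simp
  with S(1) show ?thesis by blast
qed

end

theorem mainTheorem5: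
  fixes n m :: nat
  assumes "n > 1" and "m > 0"
  shows "\<exists>(a::nat \<Rightarrow> real) (b::nat \<Rightarrow> real) T0 S.
           is_jacobi (2*n-1) b \<and>
           earliest_PST (2*n-1) (jacobi_matrix (2*n-1) a b) T0 \<and>
           card S = m \<and> (\<forall>t\<in>S. ESE (2*n-1) (jacobi_matrix (2*n-1) a b) T0 t)"
proof -
  interpret ese_example n m using assms by unfold_locales
  have "is_jacobi N b" unfolding is_jacobi_def using b_pos by simp
  then show ?thesis using earliest_PST_pi exists_ESE_times by blast
qed

end
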